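(* Let $\mathbf{g}\in H_{1,2,2}$ and let $s$ be a positive integer with $2^s \mid N(\mathbf{g})$. Then $(1+\mathbf{i})^s$ divides $\mathbf{g}$ on the left and on the right in $H_{1,2,2}$, i.e. there exist $\mathbf{h},\mathbf{h}'\in H_{1,2,2}$ with $\mathbf{g}=(1+\mathbf{i})^s\mathbf{h}=\mathbf{h}'(1+\mathbf{i})^s$.
   Context: Let $\mathbf{i},\mathbf{j},\mathbf{k}$ be the standard basis units of the real quaternions; the conjugate of $\mathbf{q}=q_1+q_2\mathbf{i}+q_3\mathbf{j}+q_4\mathbf{k}$ is $\overline{\mathbf{q}}=q_1-q_2\mathbf{i}-q_3\mathbf{j}-q_4\mathbf{k}$ and $N(\mathbf{q})=\mathbf{q}\overline{\mathbf{q}}$. $H_{1,2,2}$ is the $\mathbb{Z}$-module (a subring of the quaternions) generated by $\mathbf{v}_1=1$, $\mathbf{v}_2=\mathbf{i}$, $\mathbf{v}_3=\tfrac12(1+\mathbf{i}+\sqrt2\,\mathbf{j})$, $\mathbf{v}_4=\tfrac12(1+\mathbf{i}+\sqrt2\,\mathbf{k})$; the norm takes nonnegative integer values on it. *)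

theory Defs
  imports Complex_Main
begin

datatype quat = Quat (Re: real) (Im1: real) (Im2: real) (Im3: real)

definition qadd :: "quat \<Rightarrow> quat \<Rightarrow> quat" where
  "qadd p q = Quat (Re p + Re q) (Im1 p + Im1 q) (Im2 p + Im2 q) (Im3 p + Im3 q)"

definition qmul :: "quat \<Rightarrow> quat \<Rightarrow> quat" where
  "qmul p q = Quat
     (Re p * Re q - Im1 p * Im1 q - Im2 p * Im2 q - Im3 p * Im3 q)
     (Re p * Im1 q + Im1 p * Re q + Im2 p * Im3 q - Im3 p * Im2 q)
     (Re p * Im2 q - Im1 p * Im3 q + Im2 p * Re q + Im3 p * Im1 q)
     (Re p * Im3 q + Im1 p * Im2 q - Im2 p * Im1 q + Im3 p * Re q)"

definition qscale :: "real \<Rightarrow> quat \<Rightarrow> quat" where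
  "qscale r q = Quat (r * Re q) (r * Im1 q) (r * Im2 q) (r * Im3 q)"

definition qone :: quat where "qone = Quat 1 0 0 0"
definition qi :: quat where "qi = Quat 0 1 0 0"
definition qj :: quat where "qj = Quat 0 0 1 0"
definition qk :: quat where "qk = Quat 0 0 0 1"

primrec qpow :: "quat \<Rightarrow> nat \<Rightarrow> quat" where
  "qpow q 0 = qone"
| "qpow q (Suc n) = qmul q (qpow q n)"

definition qcnj :: "quat \<Rightarrow> quat" where
  "qcnj q = Quat (Re q) (- Im1 q) (- Im2 q) (- Im3 q)"

definition qN :: "quat \<Rightarrow> quat" where
  "qN q = qmul q (qcnj q)"

definition v1 :: quat where "v1 = qone"
definition v2 :: quat where "v2 = qi"
definition v3 :: quat where "v3 = Quat (1/2) (1/2) (sqrt 2 / 2) 0"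
definition v4 :: quat where "v4 = Quat (1/2) (1/2) 0 (sqrt 2 / 2)"

definition H122 :: "quat set" where
  "H122 = {qadd (qadd (qscale (of_int a) v1) (qscale (of_int b) v2))
                (qadd (qscale (of_int c) v3) (qscale (of_int d) v4)) | a b c d :: int. True}"

end

theory Submission
  imports Defs
begin

text \<open>Write g = a + b i + c v3 + d v4. Then N(g) is the integral quadratic form
  a^2 + b^2 + (a+b)(c+d) + c^2 + d^2 + cd, and multiplying g by 1 + i on either side acts on
  (a, b, c, d) by an integral linear map that doubles this form. Conversely, if the form is even
  then c + d and a + b + c are even, which is exactly what makes the inverse of that map integral
  on (a, b, c, d); so 1 + i divides g on both sides whenever N(g) is even, and the claim follows
  by induction on s.\<close>

definition H122_elem :: "int \<Rightarrow> int \<Rightarrow> int \<Rightarrow> int \<Rightarrow> quat" where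
  "H122_elem a b c d = qadd (qadd (qscale (of_int a) v1) (qscale (of_int b) v2))
                         (qadd (qscale (of_int c) v3) (qscale (of_int d) v4))"

definition H122_norm :: "int \<Rightarrow> int \<Rightarrow> int \<Rightarrow> int \<Rightarrow> int" where
  "H122_norm a b c d = a^2 + b^2 + (a + b) * (c + d) + c^2 + d^2 + c * d"

abbreviation qone_plus_i :: quat where
  "qone_plus_i \<equiv> qadd qone qi"

lemma H122_iff: "g \<in> H122 \<longleftrightarrow> (\<exists>a b c d. g = H122_elem a b c d)"
  unfolding H122_def H122_elem_def by blast

lemma H122_elem_in_H122: "H122_elem a b c d \<in> H122"
  using H122_iff by blast

lemma H122_elem_eq:
  "H122_elem a b c d = Quat (a + (c + d) / 2) (b + (c + d) / 2) (c * sqrt 2 / 2) (d * sqrt 2 / 2)"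
  by (simp add: H122_elem_def qadd_def qscale_def v1_def v2_def v3_def v4_def qone_def qi_def
      field_simps)

lemma qN_H122_elem: "qN (H122_elem a b c d) = Quat (of_int (H122_norm a b c d)) 0 0 0"
  by (simp add: qN_def qmul_def qcnj_def H122_elem_eq H122_norm_def power2_eq_square
      field_simps)

lemma qmul_assoc: "qmul p (qmul q r) = qmul (qmul p q) r"
  by (simp add: qmul_def algebra_simps)

lemma qmul_qone_left [simp]: "qmul qone q = q"
  and qmul_qone_right [simp]: "qmul q qone = q"
  by (simp_all add: qmul_def qone_def)

lemma qpow_Suc_right: "qpow q (Suc n) = qmul (qpow q n) q"
proof (induction n)
  case (Suc n)
  then show ?case by (simp add: qmul_assoc)
qed simp

lemma qmul_qone_plus_i_left:
  "qmul qone_plus_i (H122_elem a b c d) = H122_elem (a - b - c) (a + b + d) (c - d) (c + d)"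
  by (simp add: qmul_def qadd_def qone_def qi_def H122_elem_eq algebra_simps add_divide_distrib)

lemma qmul_qone_plus_i_right:
  "qmul (H122_elem a b c d) qone_plus_i = H122_elem (a - b - d) (a + b + c) (c + d) (d - c)"
  by (simp add: qmul_def qadd_def qone_def qi_def H122_elem_eq algebra_simps add_divide_distrib)

lemma H122_norm_even_imp: "even (H122_norm a b c d) \<Longrightarrow> even (c + d) \<and> even (a + b + c)"
  by (auto simp: H122_norm_def even_add even_mult_iff)

lemma qone_plus_i_left_divides:
  assumes "even (H122_norm a b c d)"
  obtains a' b' c' d' where "H122_elem a b c d = qmul qone_plus_i (H122_elem a' b' c' d')"
    and "H122_norm a b c d = 2 * H122_norm a' b' c' d'"
proof -
  obtain u v where u: "c + d = 2 * u" and v: "a + b + c = 2 * v"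
    using H122_norm_even_imp[OF assms] by (meson evenE)
  define a' b' c' d' where "a' = v" "b' = v - a - u" "c' = u" "d' = u - c"
  have coords: "a = a' - b' - c'" "b = a' + b' + d'" "c = c' - d'" "d = c' + d'"
    using u v unfolding a'_b'_c'_d'_def by linarith+
  show thesis
  proof
    show "H122_elem a b c d = qmul qone_plus_i (H122_elem a' b' c' d')"
      unfolding coords qmul_qone_plus_i_left ..
    show "H122_norm a b c d = 2 * H122_norm a' b' c' d'"
      unfolding coords H122_norm_def by (simp add: power2_eq_square algebra_simps)
  qed
qed

lemma qone_plus_i_right_divides:
  assumes "even (H122_norm a b c d)"
  obtains a' b' c' d' where "H122_elem a b c d = qmul (H122_elem a' b' c' d') qone_plus_i"
    and "H122_norm a b c d = 2 * H122_norm a' b' c' d'"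
proof -
  obtain u v where u: "c + d = 2 * u" and v: "a + b + c = 2 * v"
    using H122_norm_even_imp[OF assms] by (meson evenE)
  define a' b' c' d' where "a' = v - c + u" "b' = v - a - c" "c' = c - u" "d' = u"
  have coords: "a = a' - b' - d'" "b = a' + b' + c'" "c = c' + d'" "d = d' - c'"
    using u v unfolding a'_b'_c'_d'_def by linarith+
  show thesis
  proof
    show "H122_elem a b c d = qmul (H122_elem a' b' c' d') qone_plus_i"
      unfolding coords qmul_qone_plus_i_right ..
    show "H122_norm a b c d = 2 * H122_norm a' b' c' d'"
      unfolding coords H122_norm_def by (simp add: power2_eq_square algebra_simps)
  qed
qed

lemma qpow_qone_plus_i_left_divides:
  "2 ^ s dvd H122_norm a b c d \<Longrightarrow>
     \<exists>a' b' c' d'. H122_elem a b c d = qmul (qpow qone_plus_i s) (H122_elem a' b' c' d')"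
proof (induction s arbitrary: a b c d)
  case 0
  then show ?case by auto
next
  case (Suc s)
  then have "even (H122_norm a b c d)"
    by (simp add: dvd_mult_left)
  then obtain a1 b1 c1 d1 where
    step: "H122_elem a b c d = qmul qone_plus_i (H122_elem a1 b1 c1 d1)"
    and norm: "H122_norm a b c d = 2 * H122_norm a1 b1 c1 d1"
    by (rule qone_plus_i_left_divides)
  from Suc.prems have "2 ^ s dvd H122_norm a1 b1 c1 d1"
    unfolding norm by simp
  then obtain a' b' c' d' where
    "H122_elem a1 b1 c1 d1 = qmul (qpow qone_plus_i s) (H122_elem a' b' c' d')"
    using Suc.IH by blast
  then show ?case
    unfolding step by (auto simp: qmul_assoc)
qed

lemma qpow_qone_plus_i_right_divides:
  "2 ^ s dvd H122_norm a b c d \<Longrightarrow>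
     \<exists>a' b' c' d'. H122_elem a b c d = qmul (H122_elem a' b' c' d') (qpow qone_plus_i s)"
proof (induction s arbitrary: a b c d)
  case 0
  then show ?case by auto
next
  case (Suc s)
  then have "even (H122_norm a b c d)"
    by (simp add: dvd_mult_left)
  then obtain a1 b1 c1 d1 where
    step: "H122_elem a b c d = qmul (H122_elem a1 b1 c1 d1) qone_plus_i"
    and norm: "H122_norm a b c d = 2 * H122_norm a1 b1 c1 d1"
    by (rule qone_plus_i_right_divides)
  from Suc.prems have "2 ^ s dvd H122_norm a1 b1 c1 d1"
    unfolding norm by simp
  then obtain a' b' c' d' where
    "H122_elem a1 b1 c1 d1 = qmul (H122_elem a' b' c' d') (qpow qone_plus_i s)"
    using Suc.IH by blast
  then show ?case
    unfolding step by (auto simp: qmul_assoc qpow_Suc_right simp del: qpow.simps)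
qed

theorem corollary4:
  fixes g :: quat and s :: nat
  assumes "g \<in> H122" and "s > 0"
    and "\<exists>n::int. qN g = Quat (of_int n) 0 0 0 \<and> (2::int) ^ s dvd n"
  shows "\<exists>h \<in> H122. \<exists>h' \<in> H122.
           g = qmul (qpow (qadd qone qi) s) h \<and> g = qmul h' (qpow (qadd qone qi) s)"
proof -
  obtain a b c d where g: "g = H122_elem a b c d"
    using assms(1) H122_iff by blast
  obtain n where n: "qN g = Quat (of_int n) 0 0 0" "2 ^ s dvd n"
    using assms(3) by blast
  have "n = H122_norm a b c d"
    using n(1) unfolding g qN_H122_elem by simp
  with n(2) have norm_dvd: "2 ^ s dvd H122_norm a b c d"
    by simp
  obtain a1 b1 c1 d1 where "g = qmul (qpow qone_plus_i s) (H122_elem a1 b1 c1 d1)"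
    using qpow_qone_plus_i_left_divides[OF norm_dvd] unfolding g by blast
  moreover obtain a2 b2 c2 d2 where "g = qmul (H122_elem a2 b2 c2 d2) (qpow qone_plus_i s)"
    using qpow_qone_plus_i_right_divides[OF norm_dvd] unfolding g by blast
  ultimately show ?thesis
    using H122_elem_in_H122 by blast
qed

end
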